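(* Let $k>1$, $F=F(a_1,\dots,a_k)$ and $0<\lambda<1/3$. Let $E(\lambda)$ be the set of all cyclically reduced words $x$ that are not proper powers and such that for every $y\in\mathcal Y(x,\lambda)$ the length of the maximal common initial segment of $x$ and $y$ is $<\lambda|x|$. Then $E(\lambda)$ is exponentially $CR$-generic.
   Context: $A_{2k}=\{a_1^{\pm1},\dots,a_k^{\pm1}\}$; $F$ is identified with the set of freely reduced words over $A_{2k}$, and $CR$ is the set of cyclically reduced words. A relabeling automorphism of $F$ is an automorphism whose restriction to $A_{2k}$ is a permutation of $A_{2k}$. For a cyclically reduced non-proper-power word $x$, $\mathcal Y(x,\lambda)$ is the set of all words $y$ such that either (1) $y$ is a cyclic permutation of $\tau(x)$ for some nontrivial relabeling automorphism $\tau$; or (2) $y$ is a cyclic permutation of $\tau(x^{-1})$ for some (possibly trivial) relabeling automorphism $\tau$; or (3) $y$ is obtained by a nontrivial cyclic permutation of $x$. For $S\subseteq F$, $\rho(n,S)$ is the number of $x\in S$ with $|x|\le n$; $S\subseteq CR$ is exponentially $CR$-generic if there are $C>0$, $0<\sigma<1$ with $|\rho(n,S)/\rho(n,CR)-1|\le C\sigma^n$ for all $n$. A word of length $\lambda|x|$ with $\lambda|x|$ non-integer means length $\lfloor\lambda|x|\rfloor$. *)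

theory Defs
  imports Complex_Main
begin

text \<open>Letters of A_2k: (i, True) is a_(i+1), (i, False) is its inverse, for i < k.\<close>
type_synonym letter = "nat \<times> bool"

definition letters :: "nat \<Rightarrow> letter set" where
  "letters k = {(i, b). i < k}"

fun inv_letter :: "letter \<Rightarrow> letter" where
  "inv_letter (i, b) = (i, \<not> b)"

fun freely_reduced :: "letter list \<Rightarrow> bool" where
  "freely_reduced (a # b # w) = (b \<noteq> inv_letter a \<and> freely_reduced (b # w))"
| "freely_reduced _ = True"

text \<open>Elements of F = F(a_1..a_k): freely reduced words over A_2k.\<close>
definition fword :: "nat \<Rightarrow> letter list \<Rightarrow> bool" where
  "fword k w \<longleftrightarrow> set w \<subseteq> letters k \<and> freely_reduced w"

definition cyc_reduced :: "nat \<Rightarrow> letter list \<Rightarrow> bool" where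
  "cyc_reduced k w \<longleftrightarrow> fword k w \<and> (w = [] \<or> last w \<noteq> inv_letter (hd w))"

definition CR :: "nat \<Rightarrow> letter list set" where
  "CR k = {w. cyc_reduced k w}"

text \<open>Free reduction (group multiplication in F is reduce of concatenation).\<close>
fun red_cons :: "letter \<Rightarrow> letter list \<Rightarrow> letter list" where
  "red_cons a [] = [a]"
| "red_cons a (b # w) = (if b = inv_letter a then w else a # b # w)"

definition reduce :: "letter list \<Rightarrow> letter list" where
  "reduce w = foldr red_cons w []"

definition proper_power :: "nat \<Rightarrow> letter list \<Rightarrow> bool" where
  "proper_power k x \<longleftrightarrow> (\<exists>u m. fword k u \<and> m \<ge> 2 \<and> x = reduce (concat (replicate m u)))"

definition word_inv :: "letter list \<Rightarrow> letter list" where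
  "word_inv w = rev (map inv_letter w)"

text \<open>Relabeling automorphisms correspond exactly to permutations sigma of A_2k
  compatible with inversion; the automorphism acts letterwise on reduced words.\<close>
definition relabeling :: "nat \<Rightarrow> (letter \<Rightarrow> letter) \<Rightarrow> bool" where
  "relabeling k \<sigma> \<longleftrightarrow> bij_betw \<sigma> (letters k) (letters k) \<and>
     (\<forall>a \<in> letters k. \<sigma> (inv_letter a) = inv_letter (\<sigma> a))"

definition nontrivial_on :: "nat \<Rightarrow> (letter \<Rightarrow> letter) \<Rightarrow> bool" where
  "nontrivial_on k \<sigma> \<longleftrightarrow> (\<exists>a \<in> letters k. \<sigma> a \<noteq> a)"

definition Yset :: "nat \<Rightarrow> letter list \<Rightarrow> letter list set" where
  "Yset k x = {y.
      (\<exists>\<sigma> n. relabeling k \<sigma> \<and> nontrivial_on k \<sigma> \<and> y = rotate n (map \<sigma> x))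
    \<or> (\<exists>\<sigma> n. relabeling k \<sigma> \<and> y = rotate n (map \<sigma> (word_inv x)))
    \<or> (\<exists>n. 0 < n \<and> n < length x \<and> y = rotate n x)}"

fun lcp :: "letter list \<Rightarrow> letter list \<Rightarrow> nat" where
  "lcp (a # u) (b # v) = (if a = b then Suc (lcp u v) else 0)"
| "lcp _ _ = 0"

definition Eset :: "nat \<Rightarrow> real \<Rightarrow> letter list set" where
  "Eset k lam = {x. cyc_reduced k x \<and> \<not> proper_power k x \<and>
      (\<forall>y \<in> Yset k x. real (lcp x y) < lam * real (length x))}"

definition rho :: "nat \<Rightarrow> letter list set \<Rightarrow> nat" where
  "rho n S = card {x \<in> S. length x \<le> n}"

definition exp_CR_generic :: "nat \<Rightarrow> letter list set \<Rightarrow> bool" where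
  "exp_CR_generic k S \<longleftrightarrow> S \<subseteq> CR k \<and>
     (\<exists>C s. C > 0 \<and> 0 < s \<and> s < 1 \<and>
        (\<forall>n. \<bar>real (rho n S) / real (rho n (CR k)) - 1\<bar> \<le> C * s ^ n))"

end

theory Submission
  imports Defs "HOL-Library.FuncSet"
begin

text \<open>
  Let \<open>x\<close> be a cyclically reduced word of length \<open>m\<close> outside \<open>E(lam)\<close> and
  \<open>L = ceil (lam m)\<close>. Either \<open>x\<close> is a proper power, hence a nontrivial rotation of itself, or
  its first \<open>L\<close> letters agree with those of some \<open>y \<in> Y(x, lam)\<close>. In both cases
  \<open>x ! i = f (x ! p i)\<close> for all \<open>i < L\<close>, where the pattern \<open>(f, p)\<close> consists of a
  relabeling and a rotation of the positions, of a nontrivial relabeling and the identity, or of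
  a relabeling composed with inversion and a reflection of the positions; there are \<open>O(m)\<close>
  patterns.

  Reading a freely reduced word from left to right, every letter has at most \<open>2k - 1\<close>
  choices, and at a position forced by the pattern (the later of \<open>i\<close> and \<open>p i\<close>, or \<open>i\<close> itself
  when \<open>p = id\<close>, where it must be one of the at most \<open>2k - 2\<close> fixed letters of \<open>f\<close>) at most
  \<open>2k - 2\<close> remain. As \<open>p\<close> is injective with at most two fixed points, at least
  \<open>(L - 2) / 2\<close> positions are forced, so a pattern admits at most
  \<open>2 (2k - 1)^m theta^((L - 2) / 2)\<close> words, \<open>theta = (2k - 2) / (2k - 1) < 1\<close>, while there
  are at least \<open>(2k - 1)^(m - 2)\<close> cyclically reduced words of length \<open>m\<close>. Summing over the
  patterns and the lengths up to \<open>n\<close> bounds the exceptional proportion by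
  \<open>O(n^2 theta^(lam n / 2))\<close>.
\<close>

lemma inv_letter_inv_letter [simp]: "inv_letter (inv_letter a) = a"
  by (cases a) simp

lemma inv_letter_neq [simp]: "inv_letter a \<noteq> a" "a \<noteq> inv_letter a"
  by (cases a, simp)+

lemma inv_letter_eq_iff [simp]: "inv_letter a = inv_letter b \<longleftrightarrow> a = b"
  by (metis inv_letter_inv_letter)

lemma inv_letter_in_letters: "a \<in> letters k \<Longrightarrow> inv_letter a \<in> letters k"
  by (cases a) (simp add: letters_def)

lemma inj_inv_letter: "inj_on inv_letter A"
  by (rule inj_on_inverseI[of _ inv_letter]) simp

lemma image_inv_letter_letters: "inv_letter ` letters k = letters k"
  using inv_letter_in_letters by (metis image_subset_iff inv_letter_inv_letter subset_antisym subsetI imageI)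

lemma letters_eq: "letters k = {..<k} \<times> UNIV"
  by (auto simp: letters_def)

lemma finite_letters [simp]: "finite (letters k)"
  by (simp add: letters_eq)

lemma card_letters: "card (letters k) = 2 * k"
  by (simp add: letters_eq card_cartesian_product)

lemma freely_reduced_Cons:
  "freely_reduced (a # w) \<longleftrightarrow> freely_reduced w \<and> (w = [] \<or> hd w \<noteq> inv_letter a)"
  by (cases w) auto

lemma freely_reduced_append:
  "freely_reduced (xs @ ys) \<longleftrightarrow> freely_reduced xs \<and> freely_reduced ys \<and>
     (xs = [] \<or> ys = [] \<or> hd ys \<noteq> inv_letter (last xs))"
  by (induction xs) (auto simp: freely_reduced_Cons)

lemma freely_reduced_nth:
  "freely_reduced w \<Longrightarrow> Suc j < length w \<Longrightarrow> w ! Suc j \<noteq> inv_letter (w ! j)"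
proof (induction w arbitrary: j rule: freely_reduced.induct)
  case (1 a b w)
  then show ?case by (cases j) auto
qed auto

lemma freely_reduced_replicate: "freely_reduced (replicate r a)"
  by (induction r) (auto simp: freely_reduced_Cons)

lemma fword_nth: "fword k x \<Longrightarrow> j < length x \<Longrightarrow> x ! j \<in> letters k"
  by (auto simp: fword_def)

lemma word_inv_Nil [simp]: "word_inv [] = []"
  by (simp add: word_inv_def)

lemma length_word_inv [simp]: "length (word_inv v) = length v"
  by (simp add: word_inv_def)

lemma word_inv_eq_Nil_iff [simp]: "word_inv v = [] \<longleftrightarrow> v = []"
  by (simp add: word_inv_def)

lemma word_inv_word_inv [simp]: "word_inv (word_inv v) = v"
  by (simp add: word_inv_def rev_map comp_def)

lemma word_inv_Cons: "word_inv (a # v) = word_inv v @ [inv_letter a]"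
  by (simp add: word_inv_def)

lemma last_word_inv: "v \<noteq> [] \<Longrightarrow> last (word_inv v) = inv_letter (hd v)"
  by (simp add: word_inv_def last_rev hd_map)

lemma nth_word_inv: "i < length v \<Longrightarrow> word_inv v ! i = inv_letter (v ! (length v - 1 - i))"
  by (simp add: word_inv_def rev_nth)

section \<open>Free reduction and proper powers\<close>

lemma reduce_Cons: "reduce (a # w) = red_cons a (reduce w)"
  by (simp add: reduce_def)

lemma freely_reduced_reduce: "freely_reduced (reduce w)"
proof (induction w)
  case (Cons a w)
  then show ?case
    by (cases "reduce w") (auto simp: reduce_Cons freely_reduced_Cons)
qed (simp add: reduce_def)

lemma reduce_freely_reduced: "freely_reduced w \<Longrightarrow> reduce w = w"
proof (induction w)
  case (Cons a w)
  then show ?case by (cases w) (auto simp: reduce_Cons freely_reduced_Cons)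
qed (simp add: reduce_def)

lemma reduce_append: "reduce (xs @ ys) = foldr red_cons xs (reduce ys)"
  by (simp add: reduce_def)

lemma reduce_append_reduce: "reduce (xs @ reduce ys) = reduce (xs @ ys)"
  by (simp add: reduce_append reduce_freely_reduced freely_reduced_reduce)

lemma red_cons_inv_letter: "freely_reduced w \<Longrightarrow> red_cons b (red_cons (inv_letter b) w) = w"
  by (cases w rule: freely_reduced.cases) auto

lemma reduce_cancel_pair: "reduce (xs @ [inv_letter b, b] @ ys) = reduce (xs @ ys)"
  using red_cons_inv_letter[OF freely_reduced_reduce, of "inv_letter b" ys]
  by (simp add: reduce_append reduce_Cons)

lemma reduce_cancel: "reduce (xs @ word_inv v @ v @ ys) = reduce (xs @ ys)"
proof (induction v arbitrary: ys)
  case (Cons a v)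
  have "reduce (xs @ word_inv (a # v) @ (a # v) @ ys) = reduce ((xs @ word_inv v) @ [inv_letter a, a] @ v @ ys)"
    by (simp add: word_inv_Cons)
  also have "\<dots> = reduce ((xs @ word_inv v) @ v @ ys)"
    by (rule reduce_cancel_pair)
  finally show ?case using Cons by simp
qed simp

lemma reduce_append_word_inv: "reduce (v @ word_inv v) = []"
  using reduce_cancel[of "[]" "word_inv v" "[]"] by (simp add: reduce_def)

lemma reduce_power_conjugate:
  "reduce (concat (replicate (Suc j) (v @ w @ word_inv v))) = reduce (v @ concat (replicate (Suc j) w) @ word_inv v)"
proof (induction j)
  case (Suc j)
  let ?u = "v @ w @ word_inv v"
  have "reduce (concat (replicate (Suc (Suc j)) ?u)) = reduce (?u @ reduce (concat (replicate (Suc j) ?u)))"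
    by (simp only: replicate_Suc concat.simps reduce_append_reduce)
  also have "\<dots> = reduce ((v @ w) @ word_inv v @ v @ concat (replicate (Suc j) w) @ word_inv v)"
    by (simp only: Suc reduce_append_reduce) simp
  also have "\<dots> = reduce (v @ concat (replicate (Suc (Suc j)) w) @ word_inv v)"
    by (simp only: reduce_cancel) simp
  finally show ?case .
qed simp

lemma freely_reduced_conjugate_decomposition:
  "freely_reduced u \<Longrightarrow> \<exists>v w. u = v @ w @ word_inv v \<and> (w = [] \<or> last w \<noteq> inv_letter (hd w))"
proof (induction "length u" arbitrary: u rule: less_induct)
  case less
  show ?case
  proof (cases "u = [] \<or> last u \<noteq> inv_letter (hd u)")
    case True
    then show ?thesis by (metis append.left_neutral append_Nil2 word_inv_Nil)
  next
    case False
    then obtain a u1 where "u = a # u1" "last u = inv_letter a"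
      by (cases u) auto
    moreover have "u1 \<noteq> []"
      using calculation by auto
    ultimately obtain u' where u: "u = a # u' @ [inv_letter a]"
      by (metis append_butlast_last_id last_ConsR)
    then have "freely_reduced u'"
      using less.prems freely_reduced_append[of "a # u'" "[inv_letter a]"] freely_reduced_Cons[of a u']
      by simp
    moreover have "length u' < length u"
      using u by simp
    ultimately obtain v w where "u' = v @ w @ word_inv v" "w = [] \<or> last w \<noteq> inv_letter (hd w)"
      using less.hyps by blast
    with u show ?thesis
      by (intro exI[of _ "a # v"] exI[of _ w]) (simp add: word_inv_Cons)
  qed
qed

lemma hd_concat_replicate: "1 \<le> j \<Longrightarrow> w \<noteq> [] \<Longrightarrow> hd (concat (replicate j w)) = hd w"
  by (cases j) simp_all

lemma last_concat_replicate: "1 \<le> j \<Longrightarrow> w \<noteq> [] \<Longrightarrow> last (concat (replicate j w)) = last w"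
  by (induction j rule: dec_induct) auto

lemma freely_reduced_concat_replicate:
  assumes "freely_reduced w" "w \<noteq> []" "last w \<noteq> inv_letter (hd w)"
  shows "freely_reduced (concat (replicate j w))"
proof (induction j)
  case (Suc j)
  then show ?case
    using assms by (cases j) (auto simp: freely_reduced_append)
qed simp

lemma cyc_reduced_proper_power:
  assumes cr: "cyc_reduced k x" and pp: "proper_power k x" and "x \<noteq> []"
  obtains w j where "2 \<le> j" "w \<noteq> []" "x = concat (replicate j w)"
proof -
  \<comment> \<open>\<open>u = v w v\<^sup>-\<^sup>1\<close> with \<open>w\<close> cyclically reduced, so \<open>x = v w\<^sup>j v\<^sup>-\<^sup>1\<close>; cyclic reduction of \<open>x\<close> forces \<open>v = []\<close>.\<close>
  obtain u j where u: "freely_reduced u" "2 \<le> j" "x = reduce (concat (replicate j u))"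
    using pp by (auto simp: proper_power_def fword_def)
  obtain v w where vw: "u = v @ w @ word_inv v" "w = [] \<or> last w \<noteq> inv_letter (hd w)"
    using freely_reduced_conjugate_decomposition[OF u(1)] by blast
  have j: "j = Suc (j - 1)"
    using u(2) by simp
  have x: "x = reduce (v @ concat (replicate j w) @ word_inv v)"
    using u(3) vw(1) reduce_power_conjugate[of "j - 1" v w] j by simp
  have "w \<noteq> []"
    using x \<open>x \<noteq> []\<close> reduce_append_word_inv[of v] by auto
  moreover have "concat (replicate j w) \<noteq> []"
    "hd (concat (replicate j w)) = hd w" "last (concat (replicate j w)) = last w"
    using \<open>w \<noteq> []\<close> u(2) by (simp_all add: hd_concat_replicate last_concat_replicate)
  ultimately have "freely_reduced (v @ concat (replicate j w) @ word_inv v)"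
    using u(1) vw freely_reduced_concat_replicate[of w j]
    by (auto simp: freely_reduced_append)
  then have x_eq: "x = v @ concat (replicate j w) @ word_inv v"
    using x by (simp add: reduce_freely_reduced)
  have "v = []"
  proof (rule ccontr)
    assume "v \<noteq> []"
    then have "last x = inv_letter (hd x)"
      using x_eq by (simp add: last_word_inv)
    then show False
      using cr \<open>x \<noteq> []\<close> by (simp add: cyc_reduced_def)
  qed
  then show thesis
    using that u(2) \<open>w \<noteq> []\<close> x_eq by simp
qed

lemma rotate_length_concat_replicate:
  "rotate (length w) (concat (replicate j w)) = concat (replicate j w)"
proof (cases j)
  case (Suc i)
  have "concat (replicate i w) @ w = w @ concat (replicate i w)"
    by (induction i) auto
  then show ?thesis
    using Suc by (simp add: rotate_append)
qed simp

lemma cyc_reduced_proper_power_rotate: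
  assumes "cyc_reduced k x" "proper_power k x" "x \<noteq> []"
  obtains n where "0 < n" "n < length x" "rotate n x = x"
proof -
  obtain w j where "2 \<le> j" "w \<noteq> []" and x: "x = concat (replicate j w)"
    using cyc_reduced_proper_power[OF assms] .
  have "2 * length w \<le> j * length w"
    using \<open>2 \<le> j\<close> by (rule mult_right_mono) simp
  moreover have "length x = j * length w"
    using x by (simp add: length_concat sum_list_replicate)
  ultimately show thesis
    using that[of "length w"] \<open>w \<noteq> []\<close> x rotate_length_concat_replicate by force
qed

section \<open>Counting words through their prefix tree\<close>

definition branches :: "'a list set \<Rightarrow> 'a list \<Rightarrow> 'a set" where
  "branches S p = {y ! length p | y. y \<in> S \<and> take (length p) y = p}"

lemma finite_branches: "finite S \<Longrightarrow> finite (branches S p)"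
  unfolding branches_def by simp

lemma take_Suc_image:
  assumes "\<forall>y\<in>S. length y = m" "j < m"
  shows "take (Suc j) ` S = (\<Union>p\<in>take j ` S. (\<lambda>a. p @ [a]) ` branches S p)"
proof -
  have take_Suc: "take (Suc j) y = take j y @ [y ! j]" if "y \<in> S" for y
    using that assms by (simp add: take_Suc_conv_app_nth)
  show ?thesis
  proof (intro equalityI subsetI)
    fix z assume "z \<in> take (Suc j) ` S"
    then obtain y where y: "y \<in> S" "z = take j y @ [y ! j]"
      using take_Suc by blast
    moreover have "y ! j \<in> branches S (take j y)"
      using y(1) assms unfolding branches_def by force
    ultimately show "z \<in> (\<Union>p\<in>take j ` S. (\<lambda>a. p @ [a]) ` branches S p)"
      by blast
  next
    fix z assume "z \<in> (\<Union>p\<in>take j ` S. (\<lambda>a. p @ [a]) ` branches S p)"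
    then obtain y a where "y \<in> S" "a \<in> branches S (take j y)" "z = take j y @ [a]"
      by blast
    moreover from this obtain y' where "y' \<in> S" "take j y' = take j y" "a = y' ! j"
      using assms by (auto simp: branches_def)
    ultimately show "z \<in> take (Suc j) ` S"
      using take_Suc by (metis image_eqI)
  qed
qed

lemma card_take_Suc_image:
  assumes "finite S" "\<forall>y\<in>S. length y = m" "j < m"
  shows "card (take (Suc j) ` S) = (\<Sum>p\<in>take j ` S. card (branches S p))"
proof -
  have "card (take (Suc j) ` S) = (\<Sum>p\<in>take j ` S. card ((\<lambda>a. p @ [a]) ` branches S p))"
    unfolding take_Suc_image[OF assms(2,3)]
  proof (rule card_UN_disjoint)
    show "\<forall>p\<in>take j ` S. \<forall>q\<in>take j ` S. p \<noteq> q \<longrightarrow>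
        (\<lambda>a. p @ [a]) ` branches S p \<inter> (\<lambda>a. q @ [a]) ` branches S q = {}"
      by blast
  qed (simp_all add: assms(1) finite_branches)
  also have "\<dots> = (\<Sum>p\<in>take j ` S. card (branches S p))"
    by (intro sum.cong refl card_image) (simp add: inj_on_def)
  finally show ?thesis .
qed

lemma take_image_eq: "\<forall>y\<in>S. length y = m \<Longrightarrow> take m ` S = S"
  by (auto simp: image_iff)

lemma card_le_prod_branches:
  assumes "finite S" "\<forall>y\<in>S. length y = m"
    and "\<And>j x. j < m \<Longrightarrow> x \<in> S \<Longrightarrow> card (branches S (take j x)) \<le> c j"
  shows "card S \<le> (\<Prod>j<m. c j)"
proof -
  have "card (take j ` S) \<le> (\<Prod>i<j. c i)" if "j \<le> m" for j
    using that
  proof (induction j)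
    case 0
    have "card (take 0 ` S) \<le> card {[] :: 'a list}"
      by (rule card_mono) auto
    then show ?case
      by simp
  next
    case (Suc j)
    have "card (take (Suc j) ` S) = (\<Sum>p\<in>take j ` S. card (branches S p))"
      using Suc.prems assms(1,2) by (intro card_take_Suc_image) auto
    also have "\<dots> \<le> (\<Sum>p\<in>take j ` S. c j)"
      using Suc.prems assms(3) by (intro sum_mono) auto
    also have "\<dots> \<le> (\<Prod>i<j. c i) * c j"
      using Suc by simp
    finally show ?case
      by simp
  qed
  from this[of m] show ?thesis
    using take_image_eq[OF assms(2)] by simp
qed

lemma card_ge_prod_branches:
  assumes "finite S" "S \<noteq> {}" "\<forall>y\<in>S. length y = m"
    and "\<And>j x. j < m \<Longrightarrow> x \<in> S \<Longrightarrow> c j \<le> card (branches S (take j x))"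
  shows "(\<Prod>j<m. c j) \<le> card S"
proof -
  have "(\<Prod>i<j. c i) \<le> card (take j ` S)" if "j \<le> m" for j
    using that
  proof (induction j)
    case 0
    have "take 0 ` S = {[]}"
      using assms(2) by auto
    then show ?case
      by simp
  next
    case (Suc j)
    have "(\<Prod>i<Suc j. c i) \<le> (\<Sum>p\<in>take j ` S. c j)"
      using Suc by simp
    also have "\<dots> \<le> (\<Sum>p\<in>take j ` S. card (branches S p))"
      using Suc.prems assms(4) by (intro sum_mono) auto
    also have "\<dots> = card (take (Suc j) ` S)"
      using Suc.prems assms(1,3) by (intro card_take_Suc_image[symmetric]) auto
    finally show ?case .
  qed
  from this[of m] show ?thesis
    using take_image_eq[OF assms(3)] by simp
qed

section \<open>Freely reduced words with forced letters\<close>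

definition words :: "nat \<Rightarrow> nat \<Rightarrow> letter list set" where
  "words k m = {x. fword k x \<and> length x = m}"

definition growth :: "nat \<Rightarrow> real" where
  "growth k = real (2 * k - 1)"

definition theta :: "nat \<Rightarrow> real" where
  "theta k = real (2 * k - 2) / real (2 * k - 1)"

lemma growth_ge: "2 \<le> k \<Longrightarrow> 3 \<le> growth k"
  by (simp add: growth_def)

lemma theta_pos: "2 \<le> k \<Longrightarrow> 0 < theta k"
  by (simp add: theta_def)

lemma theta_less_1: "2 \<le> k \<Longrightarrow> theta k < 1"
  by (simp add: theta_def)

lemma growth_mult_theta: "2 \<le> k \<Longrightarrow> growth k * theta k = real (2 * k - 2)"
  by (simp add: growth_def theta_def)

lemma finite_words: "finite (words k m)"
proof (rule finite_subset)
  show "words k m \<subseteq> {xs. set xs \<subseteq> letters k \<and> length xs = m}"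
    by (auto simp: words_def fword_def)
qed (simp add: finite_lists_length_eq)

lemma branches_words_subset:
  assumes "S \<subseteq> words k m" "j < m" "x \<in> S"
  shows "branches S (take j x) \<subseteq> letters k - (if j = 0 then {} else {inv_letter (x ! (j - 1))})"
proof
  fix a assume "a \<in> branches S (take j x)"
  then obtain y where y: "y \<in> S" "take j y = take j x" "a = y ! j"
    using assms by (auto simp: branches_def words_def)
  have y_word: "fword k y" "length y = m"
    using y(1) assms(1) by (auto simp: words_def)
  have "a \<in> letters k"
    using y(3) y_word assms(2) by (simp add: fword_nth)
  moreover have "a \<noteq> inv_letter (x ! (j - 1))" if "j \<noteq> 0"
  proof -
    have "x ! (j - 1) = y ! (j - 1)"
      using y(2) that by (metis diff_less less_numeral_extra(1) nth_take zero_less_iff_neq_zero)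
    then show ?thesis
      using freely_reduced_nth[of y "j - 1"] y(3) y_word assms(2) that by (simp add: fword_def)
  qed
  ultimately show "a \<in> letters k - (if j = 0 then {} else {inv_letter (x ! (j - 1))})"
    by auto
qed

lemma card_branches_words_le:
  assumes "S \<subseteq> words k m" "j < m" "x \<in> S"
  shows "card (branches S (take j x)) \<le> (if j = 0 then 2 * k else 2 * k - 1)"
proof -
  have "x ! (j - 1) \<in> letters k"
    using assms by (auto simp: words_def fword_nth)
  then have "card (letters k - (if j = 0 then {} else {inv_letter (x ! (j - 1))}))
      = (if j = 0 then 2 * k else 2 * k - 1)"
    by (simp add: card_letters inv_letter_in_letters)
  then show ?thesis
    using card_mono[OF _ branches_words_subset[OF assms]] by simp
qed

lemma card_words_thin_positions_le:
  assumes k: "2 \<le> k" and S: "S \<subseteq> words k m" and G: "G \<subseteq> {..<m}"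
    and thin: "\<And>j x. j \<in> G \<Longrightarrow> x \<in> S \<Longrightarrow> card (branches S (take j x)) \<le> 2 * k - 2"
  shows "real (card S) \<le> 2 * growth k ^ m * theta k ^ card G"
proof -
  define c where "c j = (if j \<in> G then 2 * k - 2 else if j = 0 then 2 * k else 2 * k - 1)" for j
  have "card S \<le> (\<Prod>j<m. c j)"
  proof (rule card_le_prod_branches)
    show "finite S"
      using S finite_words by (rule finite_subset)
    show "\<forall>y\<in>S. length y = m"
      using S by (auto simp: words_def)
    show "card (branches S (take j x)) \<le> c j" if "j < m" "x \<in> S" for j x
      using thin[OF _ that(2)] card_branches_words_le[OF S that] by (simp add: c_def)
  qed
  then have "real (card S) \<le> (\<Prod>j<m. real (c j))"
    by (metis of_nat_le_iff of_nat_prod)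
  also have "\<dots> \<le> (\<Prod>j<m. (if j = 0 then 2 else 1) * (growth k * (if j \<in> G then theta k else 1)))"
    using k by (intro prod_mono) (auto simp: c_def growth_def theta_def)
  also have "\<dots> = (if m = 0 then 1 else 2) * (growth k ^ m * theta k ^ card G)"
  proof -
    have "(\<Prod>j<m. if j \<in> G then theta k else 1) = (\<Prod>j\<in>{..<m} \<inter> G. theta k)"
      by (rule prod.inter_restrict[symmetric]) simp
    then show ?thesis
      using G by (simp add: prod.distrib Int_absorb1)
  qed
  also have "\<dots> \<le> 2 * growth k ^ m * theta k ^ card G"
    using k theta_pos[OF k] growth_ge[OF k] by simp
  finally show ?thesis .
qed

lemma theta_power_le_powr: "2 \<le> k \<Longrightarrow> a \<le> real g \<Longrightarrow> theta k ^ g \<le> theta k powr a"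
  using theta_pos[of k] theta_less_1[of k] by (simp add: powr_realpow[symmetric] powr_mono')

definition constrained_words ::
    "nat \<Rightarrow> nat \<Rightarrow> nat \<Rightarrow> (letter \<Rightarrow> letter) \<Rightarrow> (nat \<Rightarrow> nat) \<Rightarrow> letter list set" where
  "constrained_words k m L f p = {x \<in> words k m. \<forall>i<L. x ! i = f (x ! p i)}"

lemma constrained_words_subset: "constrained_words k m L f p \<subseteq> words k m"
  by (auto simp: constrained_words_def)

lemma finite_constrained_words: "finite (constrained_words k m L f p)"
  using constrained_words_subset finite_words by (rule finite_subset)

lemma branches_constrained_words_subset:
  assumes f: "inj_on f (letters k)" and i: "i < L" "p i \<noteq> i" and j: "j = max i (p i)" "j < m"
    and x: "x \<in> constrained_words k m L f p"
  shows "branches (constrained_words k m L f p) (take j x) \<subseteq> {x ! j}"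
proof
  fix a assume "a \<in> branches (constrained_words k m L f p) (take j x)"
  then obtain y where y: "y \<in> constrained_words k m L f p" "take j y = take j x" "a = y ! j"
    using j x by (auto simp: branches_def constrained_words_def words_def)
  have before_j: "y ! t = x ! t" if "t < j" for t
    using y(2) that by (metis nth_take)
  have links: "y ! i = f (y ! p i)" "x ! i = f (x ! p i)"
    using x y(1) i(1) by (auto simp: constrained_words_def)
  show "a \<in> {x ! j}"
  proof (cases "p i < i")
    case True
    then show ?thesis
      using links before_j[of "p i"] y(3) j(1) by simp
  next
    case False
    then have "j = p i" "i < j"
      using i(2) j(1) by auto
    then have "f (y ! j) = f (x ! j)"
      using links before_j[of i] by simp
    moreover have "y ! j \<in> letters k" "x ! j \<in> letters k"
      using x y(1) j(2) by (auto simp: constrained_words_def words_def fword_nth)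
    ultimately show ?thesis
      using f y(3) by (simp add: inj_on_eq_iff)
  qed
qed

lemma card_le_twice_card_image_max:
  fixes p :: "'a::linorder \<Rightarrow> 'a"
  assumes "finite D" "inj_on p D" "\<And>i. i \<in> D \<Longrightarrow> p i \<noteq> i"
  shows "card D \<le> 2 * card ((\<lambda>i. max i (p i)) ` D)"
proof -
  let ?G = "(\<lambda>i. max i (p i)) ` D"
  \<comment> \<open>On \<open>{i \<in> D. p i < i}\<close> the map is the identity, on \<open>{i \<in> D. i < p i}\<close> it is \<open>p\<close>.\<close>
  have "card {i \<in> D. p i < i} \<le> card ?G"
    by (rule card_inj_on_le[of id]) (auto simp: assms(1) intro!: image_eqI)
  moreover have "card {i \<in> D. i < p i} \<le> card ?G"
    by (rule card_inj_on_le[of p]) (auto simp: assms(1) intro!: image_eqI inj_on_subset[OF assms(2)])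
  moreover have "card D \<le> card {i \<in> D. p i < i} + card {i \<in> D. i < p i}"
    using assms(1,3) by (intro order_trans[OF _ card_Un_le] card_mono) (auto simp: neq_iff)
  ultimately show ?thesis
    by linarith
qed

lemma card_constrained_words_le:
  assumes k: "2 \<le> k" and f: "inj_on f (letters k)" and "L \<le> m"
    and p: "\<And>i. i < L \<Longrightarrow> p i < m" and p_inj: "inj_on p {..<L}"
    and fixed: "card {i. i < L \<and> p i = i} \<le> 2"
  shows "real (card (constrained_words k m L f p)) \<le> 2 * growth k ^ m * theta k powr ((real L - 2) / 2)"
proof -
  define D where "D = {i. i < L \<and> p i \<noteq> i}"
  define G where "G = (\<lambda>i. max i (p i)) ` D"
  have G_less: "G \<subseteq> {..<m}"
    using p \<open>L \<le> m\<close> by (auto simp: G_def D_def)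
  have "real (card (constrained_words k m L f p)) \<le> 2 * growth k ^ m * theta k ^ card G"
  proof (rule card_words_thin_positions_le[OF k constrained_words_subset G_less])
    fix j x assume "j \<in> G" "x \<in> constrained_words k m L f p"
    then obtain i where "i < L" "p i \<noteq> i" "j = max i (p i)" "j < m"
      using G_less by (auto simp: G_def D_def)
    then have "card (branches (constrained_words k m L f p) (take j x)) \<le> card {x ! j}"
      using branches_constrained_words_subset[OF f] \<open>x \<in> _\<close> by (intro card_mono) auto
    then show "card (branches (constrained_words k m L f p) (take j x)) \<le> 2 * k - 2"
      using k by simp
  qed
  also have "theta k ^ card G \<le> theta k powr ((real L - 2) / 2)"
  proof (rule theta_power_le_powr[OF k])
    have "D = {..<L} - {i. i < L \<and> p i = i}"
      by (auto simp: D_def)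
    then have "L - 2 \<le> card D"
      using diff_card_le_card_Diff[of "{i. i < L \<and> p i = i}" "{..<L}"] fixed by simp
    also have "card D \<le> 2 * card G"
      unfolding G_def D_def by (rule card_le_twice_card_image_max) (auto intro: inj_on_subset[OF p_inj])
    finally show "(real L - 2) / 2 \<le> real (card G)"
      by (simp add: field_simps)
  qed
  finally show ?thesis
    using growth_ge[OF k] by (simp add: mult_left_mono)
qed

lemma card_fixed_letters_le:
  assumes "nontrivial_on k \<tau>" and inv: "\<forall>b\<in>letters k. \<tau> (inv_letter b) = inv_letter (\<tau> b)"
  shows "card {b \<in> letters k. \<tau> b = b} \<le> 2 * k - 2"
proof -
  obtain a where a: "a \<in> letters k" "\<tau> a \<noteq> a"
    using assms(1) by (auto simp: nontrivial_on_def)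
  have "\<tau> (inv_letter a) \<noteq> inv_letter a"
    using a inv by simp
  then have "{b \<in> letters k. \<tau> b = b} \<subseteq> letters k - {a, inv_letter a}"
    using a by auto
  then have "card {b \<in> letters k. \<tau> b = b} \<le> card (letters k - {a, inv_letter a})"
    by (intro card_mono) auto
  also have "\<dots> = 2 * k - 2"
    using a(1) by (simp add: card_letters inv_letter_in_letters)
  finally show ?thesis .
qed

lemma branches_constrained_words_id_subset:
  assumes "j < L" "L \<le> m" "x \<in> constrained_words k m L \<tau> id"
  shows "branches (constrained_words k m L \<tau> id) (take j x) \<subseteq> {b \<in> letters k. \<tau> b = b}"
proof
  fix b assume "b \<in> branches (constrained_words k m L \<tau> id) (take j x)"
  then obtain y where "y \<in> constrained_words k m L \<tau> id" "b = y ! j"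
    using assms by (auto simp: branches_def constrained_words_def words_def)
  then show "b \<in> {b \<in> letters k. \<tau> b = b}"
    using assms(1,2) by (auto simp: constrained_words_def words_def fword_nth)
qed

lemma card_constrained_words_id_le:
  assumes k: "2 \<le> k" and "L \<le> m" and "nontrivial_on k \<tau>"
    and "\<forall>b\<in>letters k. \<tau> (inv_letter b) = inv_letter (\<tau> b)"
  shows "real (card (constrained_words k m L \<tau> id)) \<le> 2 * growth k ^ m * theta k powr ((real L - 2) / 2)"
proof -
  have "real (card (constrained_words k m L \<tau> id)) \<le> 2 * growth k ^ m * theta k ^ card {..<L}"
  proof (rule card_words_thin_positions_le[OF k constrained_words_subset])
    show "{..<L} \<subseteq> {..<m}"
      using \<open>L \<le> m\<close> by auto
    fix j x assume "j \<in> {..<L}" "x \<in> constrained_words k m L \<tau> id"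
    then have "card (branches (constrained_words k m L \<tau> id) (take j x)) \<le> card {b \<in> letters k. \<tau> b = b}"
      using branches_constrained_words_id_subset \<open>L \<le> m\<close> by (intro card_mono) auto
    then show "card (branches (constrained_words k m L \<tau> id) (take j x)) \<le> 2 * k - 2"
      using card_fixed_letters_le[OF assms(3,4)] by linarith
  qed
  also have "theta k ^ card {..<L} \<le> theta k powr ((real L - 2) / 2)"
    using k by (intro theta_power_le_powr) auto
  finally show ?thesis
    using growth_ge[OF k] by (simp add: mult_left_mono)
qed

definition relabelings :: "nat \<Rightarrow> (letter \<Rightarrow> letter) set" where
  "relabelings k = {restrict \<sigma> (letters k) | \<sigma>. relabeling k \<sigma>}"

lemma restrict_relabelings: "relabeling k \<sigma> \<Longrightarrow> restrict \<sigma> (letters k) \<in> relabelings k"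
  by (auto simp: relabelings_def)

lemma relabeling_id: "relabeling k id"
  by (simp add: relabeling_def)

lemma relabelings_subset: "relabelings k \<subseteq> letters k \<rightarrow>\<^sub>E letters k"
  by (auto simp: relabelings_def relabeling_def bij_betw_def)

lemma finite_relabelings: "finite (relabelings k)"
  using relabelings_subset by (rule finite_subset) (simp add: finite_PiE)

lemma card_relabelings_pos: "0 < card (relabelings k)"
  using finite_relabelings relabeling_id by (auto simp: card_gt_0_iff relabelings_def)

lemma relabelings_inj_on: "\<tau> \<in> relabelings k \<Longrightarrow> inj_on \<tau> (letters k)"
  by (auto simp: relabelings_def relabeling_def bij_betw_def)

lemma relabelings_inv_letter:
  assumes "\<tau> \<in> relabelings k"
  shows "\<forall>b\<in>letters k. \<tau> (inv_letter b) = inv_letter (\<tau> b)"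
proof
  fix b assume "b \<in> letters k"
  obtain \<sigma> where "relabeling k \<sigma>" "\<tau> = restrict \<sigma> (letters k)"
    using assms by (auto simp: relabelings_def)
  then show "\<tau> (inv_letter b) = inv_letter (\<tau> b)"
    using \<open>b \<in> letters k\<close> inv_letter_in_letters by (simp add: relabeling_def)
qed

lemma mod_add_less:
  fixes i n m :: nat
  shows "i < m \<Longrightarrow> n < m \<Longrightarrow> (n + i) mod m = (if n + i < m then n + i else n + i - m)"
  by (simp add: mod_if)

lemma inj_on_rotate_index: "inj_on (\<lambda>i. (n + i) mod m) {..<m :: nat}"
proof -
  have "inj_on (\<lambda>i. (n mod m + i) mod m) {..<m}"
  proof (rule inj_onI)
    fix x y assume "x \<in> {..<m}" "y \<in> {..<m}" "(n mod m + x) mod m = (n mod m + y) mod m"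
    moreover from this have "n mod m < m"
      by simp
    ultimately show "x = y"
      using mod_add_less[of x m "n mod m"] mod_add_less[of y m "n mod m"] by (auto split: if_splits)
  qed
  then show ?thesis
    by (simp add: mod_add_left_eq)
qed

text \<open>The pairs \<open>(f, p)\<close> with \<open>y ! i = f (x ! p i)\<close> for the three kinds of words \<open>y\<close> in
  \<open>Yset k x\<close>, \<open>length x = m\<close>: a rotated relabeled copy of \<open>x\<close>, an unrotated nontrivially
  relabeled copy, and a rotated relabeled copy of \<open>word_inv x\<close>, whose letter \<open>i\<close> comes from
  position \<open>m - 1 - (n + i) mod m\<close> of \<open>x\<close>. Relabelings are restricted to the letters, so that
  there are only finitely many patterns.\<close>
definition patterns :: "nat \<Rightarrow> nat \<Rightarrow> ((letter \<Rightarrow> letter) \<times> (nat \<Rightarrow> nat)) set" where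
  "patterns k m =
     (\<lambda>(\<tau>, n). (\<tau>, \<lambda>i. (n + i) mod m)) ` (relabelings k \<times> {1..<m})
   \<union> (\<lambda>\<tau>. (\<tau>, id)) ` {\<tau> \<in> relabelings k. nontrivial_on k \<tau>}
   \<union> (\<lambda>(\<tau>, n). (\<tau> \<circ> inv_letter, \<lambda>i. m - 1 - (n + i) mod m)) ` (relabelings k \<times> {..<m})"

lemma finite_patterns: "finite (patterns k m)"
  by (simp add: patterns_def finite_relabelings)

lemma card_patterns_le: "card (patterns k m) \<le> card (relabelings k) * (2 * m + 1)"
proof -
  let ?N = "card (relabelings k)"
  have "card (patterns k m) \<le> card (relabelings k \<times> {1..<m})
      + card {\<tau> \<in> relabelings k. nontrivial_on k \<tau>} + card (relabelings k \<times> {..<m})"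
    unfolding patterns_def
    by (intro order_trans[OF card_Un_le] add_mono order_refl card_image_le)
      (simp_all add: finite_relabelings)
  also have "\<dots> \<le> ?N * m + ?N + ?N * m"
    using finite_relabelings by (intro add_mono card_mono) (simp_all add: card_cartesian_product)
  finally show ?thesis
    by (simp add: algebra_simps)
qed

lemma card_constrained_words_rotation_le:
  assumes k: "2 \<le> k" and "L \<le> m" and \<tau>: "\<tau> \<in> relabelings k" and n: "0 < n" "n < m"
  shows "real (card (constrained_words k m L \<tau> (\<lambda>i. (n + i) mod m)))
    \<le> 2 * growth k ^ m * theta k powr ((real L - 2) / 2)"
proof (rule card_constrained_words_le[OF k relabelings_inj_on[OF \<tau>] \<open>L \<le> m\<close>])
  have "{i. i < L \<and> (n + i) mod m = i} = {}"
    using n \<open>L \<le> m\<close> by (auto simp: mod_add_less)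
  then show "card {i. i < L \<and> (n + i) mod m = i} \<le> 2"
    by (metis card.empty zero_le)
  show "inj_on (\<lambda>i. (n + i) mod m) {..<L}"
    using \<open>L \<le> m\<close> by (auto intro: inj_on_subset[OF inj_on_rotate_index])
qed (use n in simp)

lemma card_constrained_words_inverse_le:
  assumes k: "2 \<le> k" and "L \<le> m" and \<tau>: "\<tau> \<in> relabelings k" and n: "n < m"
  shows "real (card (constrained_words k m L (\<tau> \<circ> inv_letter) (\<lambda>i. m - 1 - (n + i) mod m)))
    \<le> 2 * growth k ^ m * theta k powr ((real L - 2) / 2)"
proof (rule card_constrained_words_le[OF k _ \<open>L \<le> m\<close>])
  show "inj_on (\<tau> \<circ> inv_letter) (letters k)"
    using relabelings_inj_on[OF \<tau>] comp_inj_on[OF inj_inv_letter] image_inv_letter_letters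
    by metis
  show "inj_on (\<lambda>i. m - 1 - (n + i) mod m) {..<L}"
  proof (rule inj_on_subset[of _ "{..<m}"])
    show "inj_on (\<lambda>i. m - 1 - (n + i) mod m) {..<m}"
    proof (rule inj_onI)
      fix i j assume ij: "i \<in> {..<m}" "j \<in> {..<m}" "m - 1 - (n + i) mod m = m - 1 - (n + j) mod m"
      then have "(n + i) mod m = (n + j) mod m"
        using mod_less_divisor[of m "n + i"] mod_less_divisor[of m "n + j"] n by linarith
      then show "i = j"
        using inj_on_rotate_index ij(1,2) by (auto dest: inj_onD)
    qed
  qed (use \<open>L \<le> m\<close> in auto)
  have "card {i. i < L \<and> m - 1 - (n + i) mod m = i} \<le> card {(m - 1 - n) div 2, (2 * m - 1 - n) div 2}"
    using n \<open>L \<le> m\<close> by (intro card_mono) (auto simp: mod_add_less split: if_splits)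
  also have "\<dots> \<le> 2"
    by (simp add: card_insert_if)
  finally show "card {i. i < L \<and> m - 1 - (n + i) mod m = i} \<le> 2" .
qed (use n in simp)

lemma card_constrained_words_pattern_le:
  assumes "2 \<le> k" and "L \<le> m" and "(f, p) \<in> patterns k m"
  shows "real (card (constrained_words k m L f p)) \<le> 2 * growth k ^ m * theta k powr ((real L - 2) / 2)"
  using assms unfolding patterns_def
  by (auto simp del: diff_diff_left One_nat_def intro!: card_constrained_words_rotation_le
      card_constrained_words_inverse_le card_constrained_words_id_le relabelings_inv_letter)

section \<open>Words outside \<open>E(lam)\<close>\<close>

lemma nth_lcp: "i < lcp x y \<Longrightarrow> x ! i = y ! i"
proof (induction x y arbitrary: i rule: lcp.induct)
  case (1 a u b v)
  then show ?case
    by (cases i) (auto split: if_splits)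
qed auto

lemma nth_rotate_map:
  assumes "i < length x"
  shows "rotate n (map \<sigma> x) ! i = \<sigma> (x ! ((n mod length x + i) mod length x))"
proof -
  have "(n + i) mod length x < length x"
    using assms by (intro mod_less_divisor) linarith
  then show ?thesis
    using assms by (simp add: nth_rotate mod_add_left_eq)
qed

lemma nth_rotate_map_word_inv:
  assumes "i < length x"
  shows "rotate n (map \<sigma> (word_inv x)) ! i
    = \<sigma> (inv_letter (x ! (length x - 1 - (n mod length x + i) mod length x)))"
proof -
  have "(n + i) mod length x < length x"
    using assms by (intro mod_less_divisor) linarith
  then show ?thesis
    using assms by (simp add: nth_rotate mod_add_left_eq nth_word_inv)
qed

lemma constrained_wordsI:
  assumes "x \<in> words k m" "\<And>a. a \<in> letters k \<Longrightarrow> f a = g a"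
    and "\<And>i. i < L \<Longrightarrow> p i < m" "\<And>i. i < L \<Longrightarrow> x ! i = g (x ! p i)"
  shows "x \<in> constrained_words k m L f p"
  using assms by (auto simp: constrained_words_def words_def fword_nth)

lemma constrained_words_cong:
  "(\<And>i. i < L \<Longrightarrow> p i = q i) \<Longrightarrow> constrained_words k m L f p = constrained_words k m L f q"
  by (auto simp: constrained_words_def)

lemma rotate_prefix_constrained_words:
  assumes x: "x \<in> words k m" and "0 < m" "L \<le> m" "relabeling k \<sigma>"
    and agree: "\<And>i. i < L \<Longrightarrow> x ! i = rotate n (map \<sigma> x) ! i"
  shows "x \<in> constrained_words k m L (restrict \<sigma> (letters k)) (\<lambda>i. (n mod m + i) mod m)"
  using agree nth_rotate_map[of _ x n \<sigma>] \<open>0 < m\<close> \<open>L \<le> m\<close> x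
  by (intro constrained_wordsI[OF x, where g = \<sigma>]) (simp_all add: words_def)

lemma rotate_inverse_prefix_constrained_words:
  assumes x: "x \<in> words k m" and "0 < m" "L \<le> m" "relabeling k \<sigma>"
    and agree: "\<And>i. i < L \<Longrightarrow> x ! i = rotate n (map \<sigma> (word_inv x)) ! i"
  shows "x \<in> constrained_words k m L (restrict \<sigma> (letters k) \<circ> inv_letter)
    (\<lambda>i. m - 1 - (n mod m + i) mod m)"
  using agree nth_rotate_map_word_inv[of _ x n \<sigma>] \<open>0 < m\<close> \<open>L \<le> m\<close> x inv_letter_in_letters
  by (intro constrained_wordsI[OF x, where g = "\<sigma> \<circ> inv_letter"]) (simp_all add: words_def)

lemma rotation_in_patterns:
  assumes "relabeling k \<sigma>" "0 < m" "n mod m \<noteq> 0"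
  shows "(restrict \<sigma> (letters k), \<lambda>i. (n mod m + i) mod m) \<in> patterns k m"
  using assms restrict_relabelings by (force simp: patterns_def)

lemma relabeled_prefix_constrained_words:
  assumes x: "x \<in> words k m" and "0 < m" "L \<le> m" and \<sigma>: "relabeling k \<sigma>" "nontrivial_on k \<sigma>"
    and agree: "\<And>i. i < L \<Longrightarrow> x ! i = rotate n (map \<sigma> x) ! i"
  shows "x \<in> (\<Union>(f, p)\<in>patterns k m. constrained_words k m L f p)"
proof -
  have x_in: "x \<in> constrained_words k m L (restrict \<sigma> (letters k)) (\<lambda>i. (n mod m + i) mod m)"
    using x \<open>0 < m\<close> \<open>L \<le> m\<close> \<sigma>(1) agree by (rule rotate_prefix_constrained_words)
  show ?thesis
  proof (cases "n mod m = 0")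
    case True
    have "(restrict \<sigma> (letters k), id) \<in> patterns k m"
      using \<sigma> restrict_relabelings by (force simp: patterns_def nontrivial_on_def)
    moreover have "constrained_words k m L (restrict \<sigma> (letters k)) (\<lambda>i. (n mod m + i) mod m)
        = constrained_words k m L (restrict \<sigma> (letters k)) id"
      using True \<open>L \<le> m\<close> by (intro constrained_words_cong) simp
    ultimately show ?thesis
      using x_in by auto
  next
    case False
    then show ?thesis
      using x_in rotation_in_patterns[OF \<sigma>(1) \<open>0 < m\<close>] by auto
  qed
qed

lemma Yset_prefix_constrained_words:
  assumes x: "x \<in> words k m" and "0 < m" "L \<le> m" and y: "y \<in> Yset k x"
    and agree: "\<And>i. i < L \<Longrightarrow> x ! i = y ! i"
  shows "x \<in> (\<Union>(f, p)\<in>patterns k m. constrained_words k m L f p)"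
proof -
  from y consider
      (relabeled) \<sigma> n where "relabeling k \<sigma>" "nontrivial_on k \<sigma>" "y = rotate n (map \<sigma> x)"
    | (inverse) \<sigma> n where "relabeling k \<sigma>" "y = rotate n (map \<sigma> (word_inv x))"
    | (rotated) n where "0 < n" "n < m" "y = rotate n x"
    using x unfolding Yset_def words_def by auto
  then show ?thesis
  proof cases
    case (relabeled \<sigma> n)
    then show ?thesis
      using relabeled_prefix_constrained_words[OF x \<open>0 < m\<close> \<open>L \<le> m\<close>] agree by simp
  next
    case (inverse \<sigma> n)
    have "(restrict \<sigma> (letters k) \<circ> inv_letter, \<lambda>i. m - 1 - (n mod m + i) mod m) \<in> patterns k m"
      using inverse(1) restrict_relabelings \<open>0 < m\<close> by (force simp: patterns_def)
    moreover have "x \<in> constrained_words k m L (restrict \<sigma> (letters k) \<circ> inv_letter)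
        (\<lambda>i. m - 1 - (n mod m + i) mod m)"
      by (rule rotate_inverse_prefix_constrained_words[OF x \<open>0 < m\<close> \<open>L \<le> m\<close> inverse(1)])
        (use agree inverse(2) in simp)
    ultimately show ?thesis
      by auto
  next
    case (rotated n)
    have "x \<in> constrained_words k m L (restrict id (letters k)) (\<lambda>i. (n mod m + i) mod m)"
      by (rule rotate_prefix_constrained_words[OF x \<open>0 < m\<close> \<open>L \<le> m\<close> relabeling_id])
        (use agree rotated(3) in simp)
    then show ?thesis
      using rotation_in_patterns[OF relabeling_id \<open>0 < m\<close>, of n] rotated(1,2) by auto
  qed
qed

lemma not_Eset_subset_constrained_words:
  assumes "0 < lam" "lam \<le> 1" "0 < m"
  shows "{x \<in> CR k - Eset k lam. length x = m}
    \<subseteq> (\<Union>(f, p)\<in>patterns k m. constrained_words k m (nat \<lceil>lam * m\<rceil>) f p)"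
proof
  define L where "L = nat \<lceil>lam * m\<rceil>"
  fix x assume "x \<in> {x \<in> CR k - Eset k lam. length x = m}"
  then have cr: "cyc_reduced k x" and len: "length x = m" and "x \<notin> Eset k lam"
    by (auto simp: CR_def)
  have "\<exists>y\<in>Yset k x. \<forall>i<L. x ! i = y ! i"
  proof (cases "proper_power k x")
    case True
    obtain n where "0 < n" "n < length x" "rotate n x = x"
      using cyc_reduced_proper_power_rotate[OF cr True] len \<open>0 < m\<close> by auto
    then show ?thesis
      by (intro bexI[of _ "rotate n x"]) (auto simp: Yset_def)
  next
    case False
    then obtain y where "y \<in> Yset k x" "\<not> real (lcp x y) < lam * real m"
      using \<open>x \<notin> Eset k lam\<close> cr len by (auto simp: Eset_def)
    moreover from this have "L \<le> lcp x y"
      unfolding L_def by (simp add: nat_le_iff ceiling_le)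
    ultimately show ?thesis
      using nth_lcp[of _ x y] by (intro bexI[of _ y]) auto
  qed
  then obtain y where y: "y \<in> Yset k x" and agree: "\<And>i. i < L \<Longrightarrow> x ! i = y ! i"
    by blast
  have "x \<in> words k m"
    using cr len by (simp add: words_def cyc_reduced_def)
  moreover have "L \<le> m"
    using assms by (simp add: L_def mult_left_le_one_le)
  ultimately show "x \<in> (\<Union>(f, p)\<in>patterns k m. constrained_words k m L f p)"
    using y agree by (rule Yset_prefix_constrained_words[OF _ \<open>0 < m\<close>])
qed

lemma theta_powr_le:
  assumes k: "2 \<le> k" and "lam * real m \<le> real L"
  shows "theta k powr ((real L - 2) / 2) \<le> (theta k powr (lam / 2)) ^ m / theta k"
proof -
  have "theta k powr ((real L - 2) / 2) \<le> theta k powr (real m * (lam / 2) - 1)"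
    using assms theta_pos[OF k] theta_less_1[OF k] by (intro powr_mono') (auto simp: field_simps)
  also have "\<dots> = (theta k powr (lam / 2)) ^ m / theta k"
    using theta_pos[OF k] by (simp add: powr_diff powr_power)
  finally show ?thesis .
qed

lemma card_not_Eset_length_le_patterns:
  assumes k: "2 \<le> k" and lam: "0 < lam" "lam \<le> 1" and "0 < m"
  defines "L \<equiv> nat \<lceil>lam * m\<rceil>"
  shows "real (card {x \<in> CR k - Eset k lam. length x = m})
    \<le> real (card (patterns k m)) * (2 * growth k ^ m * theta k powr ((real L - 2) / 2))"
proof -
  have "L \<le> m"
    using lam by (simp add: L_def mult_left_le_one_le)
  have "finite (\<Union>(f, p)\<in>patterns k m. constrained_words k m L f p)"
    by (intro finite_UN_I finite_patterns) (simp add: finite_constrained_words split: prod.split)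
  then have "card {x \<in> CR k - Eset k lam. length x = m}
      \<le> card (\<Union>(f, p)\<in>patterns k m. constrained_words k m L f p)"
    using not_Eset_subset_constrained_words[OF lam \<open>0 < m\<close>] unfolding L_def by (intro card_mono)
  also have "\<dots> \<le> (\<Sum>(f, p)\<in>patterns k m. card (constrained_words k m L f p))"
    using card_UN_le[OF finite_patterns] by (simp add: case_prod_beta)
  finally have "real (card {x \<in> CR k - Eset k lam. length x = m})
      \<le> (\<Sum>(f, p)\<in>patterns k m. real (card (constrained_words k m L f p)))"
    by (simp add: case_prod_beta flip: of_nat_sum)
  also have "\<dots> \<le> (\<Sum>(f, p)\<in>patterns k m. 2 * growth k ^ m * theta k powr ((real L - 2) / 2))"
    using card_constrained_words_pattern_le[OF k \<open>L \<le> m\<close>] by (intro sum_mono) auto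
  finally show ?thesis
    by simp
qed

lemma card_not_Eset_length_le:
  assumes k: "2 \<le> k" and lam: "0 < lam" "lam \<le> 1"
  defines "K \<equiv> 4 * real (card (relabelings k)) / theta k"
  shows "real (card {x \<in> CR k - Eset k lam. length x = m})
    \<le> K * (real m + 1) * (growth k * theta k powr (lam / 2)) ^ m"
proof (cases "m = 0")
  case True
  have "card {x \<in> CR k - Eset k lam. length x = m} \<le> card {[] :: letter list}"
    using True by (intro card_mono) auto
  moreover have "1 \<le> K"
    using card_relabelings_pos[of k] theta_pos[OF k] theta_less_1[OF k] by (simp add: K_def field_simps)
  ultimately show ?thesis
    using True by simp
next
  case False
  have patterns: "real (card (patterns k m)) \<le> 2 * real (card (relabelings k)) * (real m + 1)"
    using card_patterns_le[of k m] by (simp add: algebra_simps flip: of_nat_mult)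
  have pattern_bound: "2 * growth k ^ m * theta k powr ((real (nat \<lceil>lam * m\<rceil>) - 2) / 2)
      \<le> 2 * growth k ^ m * ((theta k powr (lam / 2)) ^ m / theta k)"
    using theta_powr_le[OF k real_nat_ceiling_ge] growth_ge[OF k] by (intro mult_left_mono) auto
  have "0 \<le> 2 * growth k ^ m * theta k powr ((real (nat \<lceil>lam * m\<rceil>) - 2) / 2)"
    using growth_ge[OF k] by simp
  have "real (card {x \<in> CR k - Eset k lam. length x = m})
      \<le> real (card (patterns k m)) * (2 * growth k ^ m * theta k powr ((real (nat \<lceil>lam * m\<rceil>) - 2) / 2))"
    using False by (intro card_not_Eset_length_le_patterns[OF k lam]) simp
  also have "\<dots> \<le> 2 * real (card (relabelings k)) * (real m + 1)
      * (2 * growth k ^ m * ((theta k powr (lam / 2)) ^ m / theta k))"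
    using \<open>0 \<le> 2 * growth k ^ m * _\<close> by (intro mult_mono[OF patterns pattern_bound]) simp
  also have "\<dots> = K * (real m + 1) * (growth k * theta k powr (lam / 2)) ^ m"
    by (simp add: K_def power_mult_distrib)
  finally show ?thesis .
qed

section \<open>Cyclically reduced words\<close>

lemma finite_CR_length: "finite {x \<in> CR k. length x = n}"
  by (rule finite_subset[OF _ finite_words[of k n]]) (auto simp: CR_def words_def cyc_reduced_def)

lemma exists_letter_avoiding:
  assumes "2 \<le> k"
  obtains c where "c \<in> letters k" "c \<noteq> u" "c \<noteq> v"
proof -
  have "card {u, v} < card (letters k)"
    using assms card_insert_le_m1[of 2 "{v}"] by (simp add: card_letters card_insert_if)
  then have "\<not> letters k \<subseteq> {u, v}"
    by (meson card_mono finite.emptyI finite.insertI leD)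
  then show thesis
    using that by blast
qed

lemma branches_CR_supset:
  assumes k: "2 \<le> k" and j: "0 < j" "Suc j < n" and x: "x \<in> {x \<in> CR k. length x = n}"
  shows "letters k - {inv_letter (x ! (j - 1))} \<subseteq> branches {x \<in> CR k. length x = n} (take j x)"
proof
  fix b assume b: "b \<in> letters k - {inv_letter (x ! (j - 1))}"
  have x_props: "set x \<subseteq> letters k" "freely_reduced x" "length x = n"
    using x by (auto simp: CR_def cyc_reduced_def fword_def)
  obtain c where c: "c \<in> letters k" "c \<noteq> inv_letter b" "c \<noteq> inv_letter (hd x)"
    using exists_letter_avoiding[OF k] by blast
  \<comment> \<open>\<open>c\<close> cancels neither \<open>b\<close> nor, cyclically, the first letter of \<open>x\<close>.\<close>
  define z where "z = take j x @ [b] @ replicate (n - j - 1) c"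
  have "x \<noteq> []"
    using j x_props(3) by auto
  then have prefix: "take j x \<noteq> []" "last (take j x) = x ! (j - 1)" "hd (take j x) = hd x"
    using j x_props(3) by (simp_all add: last_conv_nth min_def)
  have "freely_reduced (take j x)"
    using x_props(2) freely_reduced_append[of "take j x" "drop j x"] by simp
  then have "freely_reduced z"
    using prefix b c j freely_reduced_replicate[of "n - j - 1" c]
    by (auto simp: z_def freely_reduced_append freely_reduced_Cons)
  moreover have "set z \<subseteq> letters k"
    using x_props(1) b c by (auto simp: z_def dest: in_set_takeD)
  moreover have "length z = n" "hd z = hd x" "last z = c"
    using j x_props(3) prefix by (auto simp: z_def)
  ultimately have "z \<in> {x \<in> CR k. length x = n}"
    using c(3) by (auto simp: CR_def cyc_reduced_def fword_def)
  moreover have "take j z = take j x" "z ! j = b"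
    using j x_props(3) by (simp_all add: z_def nth_append)
  ultimately show "b \<in> branches {x \<in> CR k. length x = n} (take j x)"
    unfolding branches_def using j x_props(3) by force
qed

lemma card_branches_CR_ge:
  assumes k: "2 \<le> k" and "j < n" and x: "x \<in> {x \<in> CR k. length x = n}"
  shows "(if 0 < j \<and> Suc j < n then 2 * k - 1 else 1) \<le> card (branches {x \<in> CR k. length x = n} (take j x))"
proof -
  have fin: "finite (branches {x \<in> CR k. length x = n} (take j x))"
    using finite_CR_length by (rule finite_branches)
  show ?thesis
  proof (cases "0 < j \<and> Suc j < n")
    case True
    have "x ! (j - 1) \<in> letters k"
      using x \<open>j < n\<close> by (auto simp: CR_def cyc_reduced_def fword_nth)
    then have "card (letters k - {inv_letter (x ! (j - 1))}) = 2 * k - 1"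
      by (simp add: card_letters inv_letter_in_letters)
    then show ?thesis
      using card_mono[OF fin branches_CR_supset[OF k _ _ x]] True by simp
  next
    case False
    have "x ! j \<in> branches {x \<in> CR k. length x = n} (take j x)"
      using x \<open>j < n\<close> by (auto simp: branches_def)
    then show ?thesis
      using False fin by (auto simp: Suc_le_eq card_gt_0_iff)
  qed
qed

lemma card_CR_length_ge_power:
  assumes k: "2 \<le> k"
  shows "(2 * k - 1) ^ (n - 2) \<le> card {x \<in> CR k. length x = n}"
proof -
  define c where "c j = (if 0 < j \<and> Suc j < n then 2 * k - 1 else 1)" for j
  have "(2 * k - 1) ^ (n - 2) = (\<Prod>j\<in>{1..<n - 1}. 2 * k - 1)"
    by (simp add: numeral_2_eq_2)
  also have "\<dots> = (\<Prod>j<n. c j)"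
    by (rule prod.mono_neutral_cong_right[symmetric]) (auto simp: c_def)
  also have "\<dots> \<le> card {x \<in> CR k. length x = n}"
  proof (rule card_ge_prod_branches)
    show "finite {x \<in> CR k. length x = n}"
      by (rule finite_CR_length)
    have "replicate n (0, True) \<in> {x \<in> CR k. length x = n}"
      using k freely_reduced_replicate by (auto simp: CR_def cyc_reduced_def fword_def letters_def)
    then show "{x \<in> CR k. length x = n} \<noteq> {}"
      by blast
    show "\<forall>y\<in>{x \<in> CR k. length x = n}. length y = n"
      by simp
    fix j x assume "j < n" "x \<in> {x \<in> CR k. length x = n}"
    then show "c j \<le> card (branches {x \<in> CR k. length x = n} (take j x))"
      unfolding c_def by (rule card_branches_CR_ge[OF k])
  qed
  finally show ?thesis .
qed

lemma card_CR_length_ge: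
  assumes k: "2 \<le> k"
  shows "growth k ^ n \<le> growth k ^ 2 * real (card {x \<in> CR k. length x = n})"
proof -
  have "growth k ^ n \<le> growth k ^ (2 + (n - 2))"
    using growth_ge[OF k] by (intro power_increasing) auto
  also have "\<dots> = growth k ^ 2 * real ((2 * k - 1) ^ (n - 2))"
    by (simp add: growth_def power_add power2_eq_square)
  also have "\<dots> \<le> growth k ^ 2 * real (card {x \<in> CR k. length x = n})"
    using card_CR_length_ge_power[OF k] by (intro mult_left_mono) simp_all
  finally show ?thesis .
qed

lemma bounded_poly_geometric:
  fixes s :: real
  assumes "0 \<le> s" "s < 1"
  obtains B where "\<And>n. (real n + 1) ^ 2 * s ^ n \<le> B"
proof -
  define t where "t = sqrt s"
  have t: "0 \<le> t" "t < 1" "t ^ 2 = s"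
    using assms by (auto simp: t_def)
  have "(\<lambda>n. real n * t ^ n + t ^ n) \<longlonglongrightarrow> 0 + 0"
    using t by (intro tendsto_add powser_times_n_limit_0 LIMSEQ_power_zero) simp_all
  then have "Bseq (\<lambda>n. (real n + 1) * t ^ n)"
    by (intro convergent_imp_Bseq convergentI) (simp add: algebra_simps)
  then obtain K where K: "\<And>n. \<bar>(real n + 1) * t ^ n\<bar> \<le> K"
    unfolding Bseq_def real_norm_def by blast
  have "(real n + 1) ^ 2 * s ^ n \<le> K ^ 2" for n
  proof -
    have "s ^ n = (t ^ n) ^ 2"
      using t(3) by (metis power_even_eq power_mult)
    then have "(real n + 1) ^ 2 * s ^ n = \<bar>(real n + 1) * t ^ n\<bar> ^ 2"
      by (simp add: power_mult_distrib)
    also have "\<dots> \<le> K ^ 2"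
      using K[of n] by (intro power_mono) simp_all
    finally show ?thesis .
  qed
  then show thesis
    by (rule that)
qed

lemma card_length_le_diff_le:
  fixes S T :: "letter list set" and Q K r :: real
  assumes "S \<subseteq> T" "finite {x \<in> T. length x \<le> n}" "0 \<le> K" "1 \<le> Q * r"
    and upper: "\<And>m. real (card {x \<in> T - S. length x = m}) \<le> K * (real m + 1) * (Q * r) ^ m"
  shows "real (card {x \<in> T. length x \<le> n}) - real (card {x \<in> S. length x \<le> n})
    \<le> K * (real n + 1) ^ 2 * (Q * r) ^ n"
proof -
  define A where "A = {x \<in> T. length x \<le> n}"
  define E where "E = {x \<in> S. length x \<le> n}"
  have "E \<subseteq> A" "finite A"
    using assms(1,2) by (auto simp: A_def E_def)
  have "card A - card E = card (A - E)"
    using \<open>E \<subseteq> A\<close> \<open>finite A\<close> by (simp add: card_Diff_subset finite_subset)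
  also have "A - E = (\<Union>m\<le>n. {x \<in> T - S. length x = m})"
    by (auto simp: A_def E_def)
  also have "card \<dots> \<le> (\<Sum>m\<le>n. card {x \<in> T - S. length x = m})"
    by (rule card_UN_le) simp
  finally have "real (card A) - real (card E) \<le> (\<Sum>m\<le>n. real (card {x \<in> T - S. length x = m}))"
    using card_mono[OF \<open>finite A\<close> \<open>E \<subseteq> A\<close>] by (simp add: of_nat_diff flip: of_nat_sum)
  also have "\<dots> \<le> (\<Sum>m\<le>n. K * (real n + 1) * (Q * r) ^ n)"
  proof (rule sum_mono)
    fix m assume "m \<in> {..n}"
    then have "K * (real m + 1) * (Q * r) ^ m \<le> K * (real n + 1) * (Q * r) ^ n"
      using assms(3,4) by (intro mult_mono power_increasing) auto
    then show "real (card {x \<in> T - S. length x = m}) \<le> K * (real n + 1) * (Q * r) ^ n"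
      using upper[of m] by linarith
  qed
  also have "\<dots> = K * (real n + 1) ^ 2 * (Q * r) ^ n"
    by (simp add: power2_eq_square)
  finally show ?thesis
    by (simp add: A_def E_def)
qed

lemma rho_ratio_deviation_le:
  fixes S T :: "letter list set" and c Q K r :: real
  assumes "S \<subseteq> T" "finite {x \<in> T. length x \<le> n}" "0 \<le> K" "1 \<le> Q * r" "0 < Q" "0 < c"
    and lower: "Q ^ n \<le> c * real (card {x \<in> T. length x = n})"
    and upper: "\<And>m. real (card {x \<in> T - S. length x = m}) \<le> K * (real m + 1) * (Q * r) ^ m"
  shows "\<bar>real (rho n S) / real (rho n T) - 1\<bar> \<le> c * K * (real n + 1) ^ 2 * r ^ n"
proof -
  have "card {x \<in> T. length x = n} \<le> rho n T"
    unfolding rho_def using assms(2) by (rule card_mono) auto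
  then have low: "Q ^ n / c \<le> real (rho n T)"
    using lower \<open>0 < c\<close> by (simp add: divide_le_eq mult.commute order_trans)
  moreover have "0 < Q ^ n / c"
    using \<open>0 < c\<close> \<open>0 < Q\<close> by simp
  ultimately have "0 < real (rho n T)"
    by linarith
  have "rho n S \<le> rho n T"
    unfolding rho_def using assms(1,2) by (intro card_mono) auto
  then have "\<bar>real (rho n S) / real (rho n T) - 1\<bar> = (real (rho n T) - real (rho n S)) / real (rho n T)"
    using \<open>0 < real (rho n T)\<close> by (simp add: field_simps)
  also have "\<dots> \<le> K * (real n + 1) ^ 2 * (Q * r) ^ n / (Q ^ n / c)"
    using card_length_le_diff_le[OF assms(1-4) upper] low \<open>0 < Q ^ n / c\<close> assms(3,4)
    by (intro frac_le) (simp_all add: rho_def)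
  also have "\<dots> = c * K * (real n + 1) ^ 2 * r ^ n"
    using \<open>0 < Q\<close> by (simp add: power_mult_distrib field_simps)
  finally show ?thesis .
qed

lemma rho_ratio_le_geometric:
  fixes S T :: "letter list set" and c Q K r :: real
  assumes "S \<subseteq> T" and finite: "\<And>n. finite {x \<in> T. length x \<le> n}"
    and "0 < c" and lower: "\<And>n. Q ^ n \<le> c * real (card {x \<in> T. length x = n})"
    and upper: "\<And>m. real (card {x \<in> T - S. length x = m}) \<le> K * (real m + 1) * (Q * r) ^ m"
    and "0 < r" "r < 1" "1 \<le> Q * r"
  shows "\<exists>C s. 0 < C \<and> 0 < s \<and> s < 1 \<and>
    (\<forall>n. \<bar>real (rho n S) / real (rho n T) - 1\<bar> \<le> C * s ^ n)"
proof -
  define s where "s = sqrt r"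
  have s: "0 < s" "s < 1" "r ^ n = s ^ n * s ^ n" for n
    using \<open>0 < r\<close> \<open>r < 1\<close> by (auto simp: s_def simp flip: power_mult_distrib)
  obtain B where B: "\<And>n. (real n + 1) ^ 2 * s ^ n \<le> B"
    using bounded_poly_geometric[of s] s by auto
  have "real (card {x \<in> T - S. length x = 0}) \<le> K"
    using upper[of 0] by simp
  then have "0 \<le> K"
    using of_nat_0_le_iff order_trans by blast
  have "0 < Q * r"
    using \<open>1 \<le> Q * r\<close> by linarith
  then have "0 < Q"
    using \<open>0 < r\<close> by (simp add: zero_less_mult_iff)
  define C where "C = c * K * B + 1"
  have "\<bar>real (rho n S) / real (rho n T) - 1\<bar> \<le> C * s ^ n" for n
  proof -
    have "c * K * ((real n + 1) ^ 2 * s ^ n) \<le> c * K * B"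
      using B[of n] \<open>0 \<le> K\<close> \<open>0 < c\<close> by (intro mult_left_mono) simp_all
    then have "c * K * ((real n + 1) ^ 2 * s ^ n) \<le> C"
      by (simp add: C_def)
    then have "c * K * (real n + 1) ^ 2 * r ^ n \<le> C * s ^ n"
      using s(3)[of n] \<open>0 < s\<close> by (simp add: mult_right_mono flip: mult.assoc)
    then show ?thesis
      using rho_ratio_deviation_le[OF \<open>S \<subseteq> T\<close> finite \<open>0 \<le> K\<close> \<open>1 \<le> Q * r\<close> \<open>0 < Q\<close> \<open>0 < c\<close> lower upper,
          of n]
      by linarith
  qed
  moreover have "0 < C"
    using B[of 0] \<open>0 \<le> K\<close> \<open>0 < c\<close> by (simp add: C_def add_nonneg_pos)
  ultimately show ?thesis
    using s by blast
qed

lemma growth_mult_theta_powr_ge_1: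
  assumes k: "2 \<le> k" and "0 < lam" "lam \<le> 2"
  shows "1 \<le> growth k * theta k powr (lam / 2)"
proof -
  have "theta k powr 1 \<le> theta k powr (lam / 2)"
    using assms theta_pos[OF k] theta_less_1[OF k] by (intro powr_mono') auto
  then have "growth k * theta k \<le> growth k * theta k powr (lam / 2)"
    using theta_pos[OF k] growth_ge[OF k] by simp
  moreover have "1 \<le> growth k * theta k"
    using k by (simp add: growth_mult_theta)
  ultimately show ?thesis
    by linarith
qed

theorem lemma4p8:
  fixes k :: nat and lam :: real
  assumes "k > 1" and "0 < lam" and "lam < 1/3"
  shows "exp_CR_generic k (Eset k lam)"
proof -
  have k: "2 \<le> k" and lam: "0 < lam" "lam \<le> 1"
    using assms by auto
  have "Eset k lam \<subseteq> CR k"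
    by (auto simp: Eset_def CR_def)
  moreover have "finite {x \<in> CR k. length x \<le> n}" for n
    by (rule finite_subset[OF _ finite_lists_length_le[OF finite_letters, of k n]])
      (auto simp: CR_def cyc_reduced_def fword_def)
  moreover have "0 < theta k powr (lam / 2)" "theta k powr (lam / 2) < 1"
    using lam theta_pos[OF k] theta_less_1[OF k] by (simp_all add: powr01_less_one)
  ultimately show ?thesis
    unfolding exp_CR_generic_def
    using rho_ratio_le_geometric[where c = "growth k ^ 2", OF _ _ _ card_CR_length_ge[OF k]
        card_not_Eset_length_le[OF k lam]] growth_ge[OF k] growth_mult_theta_powr_ge_1[OF k] lam
    by auto
qed

end
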